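(* Let $\mathcal A=\mathcal A_1\times\cdots\times\mathcal A_m$ be a finite tree multi-algebra, let $\mathtt A$ be a plenary anti-tree structure of $\mathcal A$, and let $B$ be a basic relation of $\mathcal A$. If $B_\ell\subseteq\Rsh_k^\ell B_k$ for all distinct $k,\ell$ such that $k\to\ell$ is an edge of $\mathtt A$, then $B$ is closed under projection, i.e. $B_j\subseteq\Rsh_i^jB_i$ for all distinct $i,j\in\{1,\dots,m\}$.
   Context: A finite non-associative algebra is a tuple $(\mathcal A,\cup,\neg,\emptyset,\mathcal B,\diamond,\overline{\cdot},e)$ where $(\mathcal A,\cup,\neg,\emptyset,\mathcal B)$ is a finite Boolean algebra and for all $x,y,z$: $\overline{\overline x}=x$, $\overline{x\cup y}=\overline x\cup\overline y$, $\overline{x\diamond y}=\overline y\diamond\overline x$, $e\diamond x=x\diamond e=x$, $x\diamond(y\cup z)=(x\diamond y)\cup(x\diamond z)$, $(x\diamond y)\cap\overline z=\emptyset\iff(y\diamond z)\cap\overline x=\emptyset$. $r\subseteq r'$ means $r\cup r'=r'$; atoms are basic relations; $\mathsf B_i$ is the set of atoms of $\mathcal A_i$. A projection operator from $\mathcal A$ to $\mathcal A'$ is a map $\Rsh$ with $\Rsh(r\cup r')=\Rsh r\cup\Rsh r'$ and $\Rsh\overline r=\overline{\Rsh r}$. A finite multi-algebra is a product $\mathcal A_1\times\cdots\times\mathcal A_m$ of finite non-associative algebras with projection operators $\Rsh_i^j:\mathcal A_i\to\mathcal A_j$ for all distinct $i,j$. A relation $R=(R_1,\dots,R_m)$ is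 basic if all $R_i$ are atoms; it is closed under projection if $R_j\subseteq\Rsh_i^jR_i$ for all distinct $i,j$. The inverse projection $\check\Rsh_i^j:\mathcal A_j\to\mathcal A_i$ of $\Rsh_i^j$ is the projection operator defined by: for all $b\in\mathsf B_i$, $b'\in\mathsf B_j$, $b\subseteq\check\Rsh_i^jb'\iff b'\subseteq\Rsh_i^jb$. An anti-tree structure on a set $V$ is a directed graph $(V,E)$ with a root $r\in V$ such that every $v\neq r$ has exactly one directed path from $v$ to $r$; write $v\to v'$ for $(v,v')\in E$. A plenary anti-tree structure of $\mathcal A$ is an anti-tree structure $\mathtt A$ on $\{1,\dots,m\}$ such that for all distinct $i,j$, letting $i=k_0\to\cdots\to k_s\leftarrow\cdots\leftarrow k_{s+t+1}=j$ be the shortest oriented chain between $i$ and $j$ in $\mathtt A$, every $b\in\mathsf B_i$ satisfies $\Rsh_i^jb\supseteq\check\Rsh_j^{k_{s+t}}\cdots\check\Rsh_{k_{s+1}}^{k_s}\Rsh_{k_{s-1}}^{k_s}\cdots\Rsh_i^{k_1}b$ (compositions of maps). $\mathcal A$ is a tree multi-algebra if it has a plenary anti-tree structure. *)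

theory Defs
  imports Main
begin

record 'a nalg =
  ncar  :: "'a set"
  njoin :: "'a \<Rightarrow> 'a \<Rightarrow> 'a"
  nneg  :: "'a \<Rightarrow> 'a"
  nbot  :: 'a
  ntop  :: 'a
  ncomp :: "'a \<Rightarrow> 'a \<Rightarrow> 'a"
  nconv :: "'a \<Rightarrow> 'a"
  nid   :: 'a

definition nmeet :: "'a nalg \<Rightarrow> 'a \<Rightarrow> 'a \<Rightarrow> 'a" where
  "nmeet A x y = nneg A (njoin A (nneg A x) (nneg A y))"

definition nle :: "'a nalg \<Rightarrow> 'a \<Rightarrow> 'a \<Rightarrow> bool" where
  "nle A x y \<longleftrightarrow> njoin A x y = y"

definition finite_boolean_algebra :: "'a nalg \<Rightarrow> bool" where
  "finite_boolean_algebra A \<longleftrightarrow>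
     finite (ncar A) \<and>
     nbot A \<in> ncar A \<and> ntop A \<in> ncar A \<and>
     (\<forall>x\<in>ncar A. \<forall>y\<in>ncar A. njoin A x y \<in> ncar A) \<and>
     (\<forall>x\<in>ncar A. nneg A x \<in> ncar A) \<and>
     (\<forall>x\<in>ncar A. \<forall>y\<in>ncar A. njoin A x y = njoin A y x) \<and>
     (\<forall>x\<in>ncar A. \<forall>y\<in>ncar A. nmeet A x y = nmeet A y x) \<and>
     (\<forall>x\<in>ncar A. \<forall>y\<in>ncar A. \<forall>z\<in>ncar A.
        njoin A x (njoin A y z) = njoin A (njoin A x y) z) \<and>
     (\<forall>x\<in>ncar A. \<forall>y\<in>ncar A. \<forall>z\<in>ncar A.
        nmeet A x (nmeet A y z) = nmeet A (nmeet A x y) z) \<and>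
     (\<forall>x\<in>ncar A. \<forall>y\<in>ncar A. njoin A x (nmeet A x y) = x) \<and>
     (\<forall>x\<in>ncar A. \<forall>y\<in>ncar A. nmeet A x (njoin A x y) = x) \<and>
     (\<forall>x\<in>ncar A. \<forall>y\<in>ncar A. \<forall>z\<in>ncar A.
        njoin A x (nmeet A y z) = nmeet A (njoin A x y) (njoin A x z)) \<and>
     (\<forall>x\<in>ncar A. \<forall>y\<in>ncar A. \<forall>z\<in>ncar A.
        nmeet A x (njoin A y z) = njoin A (nmeet A x y) (nmeet A x z)) \<and>
     (\<forall>x\<in>ncar A. njoin A x (nbot A) = x) \<and>
     (\<forall>x\<in>ncar A. nmeet A x (ntop A) = x) \<and>
     (\<forall>x\<in>ncar A. njoin A x (nneg A x) = ntop A) \<and>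
     (\<forall>x\<in>ncar A. nmeet A x (nneg A x) = nbot A)"

definition na_algebra :: "'a nalg \<Rightarrow> bool" where
  "na_algebra A \<longleftrightarrow>
     finite_boolean_algebra A \<and>
     nid A \<in> ncar A \<and>
     (\<forall>x\<in>ncar A. nconv A x \<in> ncar A) \<and>
     (\<forall>x\<in>ncar A. \<forall>y\<in>ncar A. ncomp A x y \<in> ncar A) \<and>
     (\<forall>x\<in>ncar A. nconv A (nconv A x) = x) \<and>
     (\<forall>x\<in>ncar A. \<forall>y\<in>ncar A. nconv A (njoin A x y) = njoin A (nconv A x) (nconv A y)) \<and>
     (\<forall>x\<in>ncar A. \<forall>y\<in>ncar A. nconv A (ncomp A x y) = ncomp A (nconv A y) (nconv A x)) \<and>
     (\<forall>x\<in>ncar A. ncomp A (nid A) x = x \<and> ncomp A x (nid A) = x) \<and>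
     (\<forall>x\<in>ncar A. \<forall>y\<in>ncar A. \<forall>z\<in>ncar A.
        ncomp A x (njoin A y z) = njoin A (ncomp A x y) (ncomp A x z)) \<and>
     (\<forall>x\<in>ncar A. \<forall>y\<in>ncar A. \<forall>z\<in>ncar A.
        (nmeet A (ncomp A x y) (nconv A z) = nbot A) \<longleftrightarrow>
        (nmeet A (ncomp A y z) (nconv A x) = nbot A))"

definition natoms :: "'a nalg \<Rightarrow> 'a set" where
  "natoms A = {b \<in> ncar A. b \<noteq> nbot A \<and>
                 (\<forall>y\<in>ncar A. nle A y b \<longrightarrow> y = nbot A \<or> y = b)}"

definition proj_op :: "'a nalg \<Rightarrow> 'a nalg \<Rightarrow> ('a \<Rightarrow> 'a) \<Rightarrow> bool" where
  "proj_op A A' f \<longleftrightarrow>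
     (\<forall>x\<in>ncar A. f x \<in> ncar A') \<and>
     (\<forall>x\<in>ncar A. \<forall>y\<in>ncar A. f (njoin A x y) = njoin A' (f x) (f y)) \<and>
     (\<forall>x\<in>ncar A. f (nconv A x) = nconv A' (f x))"

definition multi_algebra :: "nat \<Rightarrow> (nat \<Rightarrow> 'a nalg) \<Rightarrow> (nat \<Rightarrow> nat \<Rightarrow> 'a \<Rightarrow> 'a) \<Rightarrow> bool" where
  "multi_algebra m A P \<longleftrightarrow>
     (\<forall>i\<in>{1..m}. na_algebra (A i)) \<and>
     (\<forall>i\<in>{1..m}. \<forall>j\<in>{1..m}. i \<noteq> j \<longrightarrow> proj_op (A i) (A j) (P i j))"

definition basic_rel :: "nat \<Rightarrow> (nat \<Rightarrow> 'a nalg) \<Rightarrow> (nat \<Rightarrow> 'a) \<Rightarrow> bool" where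
  "basic_rel m A R \<longleftrightarrow> (\<forall>i\<in>{1..m}. R i \<in> natoms (A i))"

definition closed_under_projection ::
  "nat \<Rightarrow> (nat \<Rightarrow> 'a nalg) \<Rightarrow> (nat \<Rightarrow> nat \<Rightarrow> 'a \<Rightarrow> 'a) \<Rightarrow> (nat \<Rightarrow> 'a) \<Rightarrow> bool" where
  "closed_under_projection m A P R \<longleftrightarrow>
     (\<forall>i\<in>{1..m}. \<forall>j\<in>{1..m}. i \<noteq> j \<longrightarrow> nle (A j) (R j) (P i j (R i)))"

definition inverse_proj :: "'a nalg \<Rightarrow> 'a nalg \<Rightarrow> ('a \<Rightarrow> 'a) \<Rightarrow> ('a \<Rightarrow> 'a) \<Rightarrow> bool" where
  "inverse_proj Ai Aj f Q \<longleftrightarrow>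
     proj_op Aj Ai Q \<and>
     (\<forall>b\<in>natoms Ai. \<forall>b'\<in>natoms Aj. nle Ai b (Q b') \<longleftrightarrow> nle Aj b' (f b))"

definition dpath :: "(nat \<times> nat) set \<Rightarrow> nat \<Rightarrow> nat \<Rightarrow> nat list \<Rightarrow> bool" where
  "dpath E v w ps \<longleftrightarrow> ps \<noteq> [] \<and> hd ps = v \<and> last ps = w \<and> distinct ps \<and>
     (\<forall>p. p + 1 < length ps \<longrightarrow> (ps ! p, ps ! (p + 1)) \<in> E)"

definition anti_tree :: "nat set \<Rightarrow> (nat \<times> nat) set \<Rightarrow> nat \<Rightarrow> bool" where
  "anti_tree V E r \<longleftrightarrow> E \<subseteq> V \<times> V \<and> r \<in> V \<and>
     (\<forall>v\<in>V. v \<noteq> r \<longrightarrow> (\<exists>!ps. dpath E v r ps))"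

text \<open>Oriented chain i = k_0 \<rightarrow> ... \<rightarrow> k_s \<leftarrow> ... \<leftarrow> k_n = j, given as the list
  ks = [k_0, ..., k_n] together with the index s of the top vertex.\<close>
definition oriented_chain :: "(nat \<times> nat) set \<Rightarrow> nat \<Rightarrow> nat \<Rightarrow> nat list \<Rightarrow> nat \<Rightarrow> bool" where
  "oriented_chain E i j ks s \<longleftrightarrow> ks \<noteq> [] \<and> ks ! 0 = i \<and> last ks = j \<and> s < length ks \<and>
     (\<forall>p<s. (ks ! p, ks ! (p + 1)) \<in> E) \<and>
     (\<forall>p. s \<le> p \<and> p + 1 < length ks \<longrightarrow> (ks ! (p + 1), ks ! p) \<in> E)"

definition shortest_oriented_chain :: "(nat \<times> nat) set \<Rightarrow> nat \<Rightarrow> nat \<Rightarrow> nat list \<Rightarrow> nat \<Rightarrow> bool" where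
  "shortest_oriented_chain E i j ks s \<longleftrightarrow> oriented_chain E i j ks s \<and>
     (\<forall>ks' s'. oriented_chain E i j ks' s' \<longrightarrow> length ks \<le> length ks')"

text \<open>The composite map
  Q k_n k_{n-1} \<circ> ... \<circ> Q k_{s+1} k_s \<circ> P k_{s-1} k_s \<circ> ... \<circ> P k_0 k_1,
  where Q i j denotes the inverse projection of P i j.\<close>
definition chain_map ::
  "(nat \<Rightarrow> nat \<Rightarrow> 'a \<Rightarrow> 'a) \<Rightarrow> (nat \<Rightarrow> nat \<Rightarrow> 'a \<Rightarrow> 'a) \<Rightarrow> nat list \<Rightarrow> nat \<Rightarrow> 'a \<Rightarrow> 'a" where
  "chain_map P Q ks s x =
     foldl (\<lambda>y p. if p < s then P (ks ! p) (ks ! (p + 1)) y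
                  else Q (ks ! (p + 1)) (ks ! p) y) x [0..<length ks - 1]"

definition plenary_anti_tree ::
  "nat \<Rightarrow> (nat \<Rightarrow> 'a nalg) \<Rightarrow> (nat \<Rightarrow> nat \<Rightarrow> 'a \<Rightarrow> 'a) \<Rightarrow> (nat \<times> nat) set \<Rightarrow> nat \<Rightarrow> bool" where
  "plenary_anti_tree m A P E r \<longleftrightarrow>
     anti_tree {1..m} E r \<and>
     (\<exists>Q. (\<forall>i\<in>{1..m}. \<forall>j\<in>{1..m}. i \<noteq> j \<longrightarrow> inverse_proj (A i) (A j) (P i j) (Q i j)) \<and>
          (\<forall>i\<in>{1..m}. \<forall>j\<in>{1..m}. i \<noteq> j \<longrightarrow>
             (\<forall>ks s. shortest_oriented_chain E i j ks s \<longrightarrow>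
                (\<forall>b\<in>natoms (A i). nle (A j) (chain_map P Q ks s b) (P i j b)))))"

definition tree_multi_algebra ::
  "nat \<Rightarrow> (nat \<Rightarrow> 'a nalg) \<Rightarrow> (nat \<Rightarrow> nat \<Rightarrow> 'a \<Rightarrow> 'a) \<Rightarrow> bool" where
  "tree_multi_algebra m A P \<longleftrightarrow> multi_algebra m A P \<and> (\<exists>E r. plenary_anti_tree m A P E r)"

end

theory Submission
  imports Defs
begin

(* Follow B_i along a shortest oriented chain i = k_0 -> ... -> k_s <- ... <- k_n = j through
   the composite map of the plenary condition; at every vertex k the image stays above B_k.
   Going up an edge k -> l this holds since B_l is contained in P k l B_k and projections are
   monotone; going down an edge l -> k (from k to l) it holds since, for atoms, B_k contained in
   P l k B_l is equivalent to B_l contained in the inverse projection of B_k. So B_j lies below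
   the composite image of B_i, which plenarity bounds by P i j B_i. *)

lemma nle_refl:
  assumes "finite_boolean_algebra A" "x \<in> ncar A"
  shows "nle A x x"
proof -
  have closed: "\<forall>x\<in>ncar A. \<forall>y\<in>ncar A. njoin A x y \<in> ncar A"
    and absorb_join: "\<forall>x\<in>ncar A. \<forall>y\<in>ncar A. njoin A x (nmeet A x y) = x"
    and absorb_meet: "\<forall>x\<in>ncar A. \<forall>y\<in>ncar A. nmeet A x (njoin A x y) = x"
    using assms(1) unfolding finite_boolean_algebra_def by simp_all
  have "njoin A x x = njoin A x (nmeet A x (njoin A x x))"
    using absorb_meet closed assms(2) by simp
  also have "\<dots> = x" using absorb_join closed assms(2) by simp
  finally show ?thesis by (simp add: nle_def)
qed

lemma nle_trans:
  assumes "finite_boolean_algebra A" "x \<in> ncar A" "y \<in> ncar A" "z \<in> ncar A"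
    and "nle A x y" "nle A y z"
  shows "nle A x z"
proof -
  have "njoin A x z = njoin A x (njoin A y z)" using \<open>nle A y z\<close> by (simp add: nle_def)
  also have "\<dots> = njoin A (njoin A x y) z"
    using assms(1-4) unfolding finite_boolean_algebra_def by blast
  also have "\<dots> = z" using \<open>nle A x y\<close> \<open>nle A y z\<close> by (simp add: nle_def)
  finally show ?thesis by (simp add: nle_def)
qed

lemma proj_op_closed: "proj_op A A' f \<Longrightarrow> x \<in> ncar A \<Longrightarrow> f x \<in> ncar A'"
  by (simp add: proj_op_def)

lemma proj_op_mono:
  assumes "proj_op A A' f" "x \<in> ncar A" "y \<in> ncar A" "nle A x y"
  shows "nle A' (f x) (f y)"
proof -
  have "f y = f (njoin A x y)" using \<open>nle A x y\<close> by (simp add: nle_def)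
  also have "\<dots> = njoin A' (f x) (f y)" using assms(1-3) unfolding proj_op_def by blast
  finally show ?thesis by (simp add: nle_def)
qed

lemma proj_op_nle_trans:
  assumes "finite_boolean_algebra A'" "proj_op A A' f"
    and "x \<in> ncar A" "y \<in> ncar A" "nle A x y"
    and "b \<in> ncar A'" "nle A' b (f x)"
  shows "nle A' b (f y)"
  using nle_trans[OF assms(1,6) proj_op_closed[OF assms(2,3)] proj_op_closed[OF assms(2,4)]]
    proj_op_mono[OF assms(2-5)] assms(7) by blast

lemma oriented_chain_Cons:
  assumes "oriented_chain E i j ks s" "(i', i) \<in> E"
  shows "oriented_chain E i' j (i' # ks) (Suc s)"
  using assms unfolding oriented_chain_def
proof (intro conjI allI impI; (elim conjE)?)
  fix p
  assume "p < Suc s" "ks ! 0 = i" "\<forall>p<s. (ks ! p, ks ! (p + 1)) \<in> E"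
  then show "((i' # ks) ! p, (i' # ks) ! (p + 1)) \<in> E"
    using assms(2) by (cases p) auto
next
  fix p
  assume "Suc s \<le> p" "p + 1 < length (i' # ks)"
    and "\<forall>p. s \<le> p \<and> p + 1 < length ks \<longrightarrow> (ks ! (p + 1), ks ! p) \<in> E"
  then show "((i' # ks) ! (p + 1), (i' # ks) ! p) \<in> E"
    by (cases p) auto
qed auto

lemma oriented_chain_snoc:
  assumes "oriented_chain E i j ks s" "(j', j) \<in> E"
  shows "oriented_chain E i j' (ks @ [j']) s"
  using assms unfolding oriented_chain_def
proof (intro conjI allI impI; (elim conjE)?)
  fix p
  assume p: "s \<le> p" "p + 1 < length (ks @ [j'])" and "ks \<noteq> []" "last ks = j"
    and down: "\<forall>p. s \<le> p \<and> p + 1 < length ks \<longrightarrow> (ks ! (p + 1), ks ! p) \<in> E"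
  show "((ks @ [j']) ! (p + 1), (ks @ [j']) ! p) \<in> E"
  proof (cases "p + 1 < length ks")
    case True
    then show ?thesis using down p by (simp add: nth_append)
  next
    case False
    then have "p = length ks - 1" using p by simp
    then show ?thesis using assms(2) \<open>ks \<noteq> []\<close> \<open>last ks = j\<close>
      by (simp add: nth_append last_conv_nth)
  qed
qed (auto simp: nth_append)

lemma oriented_chain_from_rtrancl: "(j, r) \<in> E\<^sup>* \<Longrightarrow> \<exists>ks. oriented_chain E r j ks 0"
proof (induction rule: converse_rtrancl_induct)
  case base
  have "oriented_chain E r r [r] 0" by (simp add: oriented_chain_def)
  then show ?case by blast
next
  case (step j' j)
  then show ?case using oriented_chain_snoc by blast
qed

lemma oriented_chain_prepend_rtrancl:
  "(i, r) \<in> E\<^sup>* \<Longrightarrow> oriented_chain E r j ks s \<Longrightarrow> \<exists>ks s. oriented_chain E i j ks s"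
proof (induction rule: converse_rtrancl_induct)
  case (step i' i)
  then show ?case using oriented_chain_Cons by blast
qed blast

lemma dpath_rtrancl: "dpath E v w ps \<Longrightarrow> (v, w) \<in> E\<^sup>*"
proof (induction ps arbitrary: v)
  case (Cons a ps)
  show ?case
  proof (cases "ps = []")
    case True
    then show ?thesis using Cons.prems by (auto simp: dpath_def)
  next
    case False
    have "dpath E (hd ps) w ps"
      using Cons.prems False unfolding dpath_def by (auto simp: nth_Cons_Suc)
    moreover have "(v, hd ps) \<in> E"
      using Cons.prems False unfolding dpath_def by (auto simp: hd_conv_nth)
    ultimately show ?thesis using Cons.IH converse_rtrancl_into_rtrancl by metis
  qed
qed (simp add: dpath_def)

lemma anti_tree_rtrancl_root: "anti_tree V E r \<Longrightarrow> v \<in> V \<Longrightarrow> (v, r) \<in> E\<^sup>*"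
  unfolding anti_tree_def by (metis dpath_rtrancl rtrancl.rtrancl_refl)

lemma anti_tree_oriented_chain:
  assumes "anti_tree V E r" "i \<in> V" "j \<in> V"
  shows "\<exists>ks s. oriented_chain E i j ks s"
  using oriented_chain_from_rtrancl oriented_chain_prepend_rtrancl anti_tree_rtrancl_root assms
  by metis

lemma shortest_oriented_chain_exists:
  assumes "oriented_chain E i j ks s"
  shows "\<exists>ks s. shortest_oriented_chain E i j ks s"
  using ex_has_least_nat[where P = "\<lambda>(ks, s). oriented_chain E i j ks s" and m = "length \<circ> fst"]
    assms unfolding shortest_oriented_chain_def by fastforce

lemma oriented_chain_set_subset:
  assumes "oriented_chain E i j ks s" "E \<subseteq> V \<times> V" "i \<in> V"
  shows "set ks \<subseteq> V"
proof
  fix k assume "k \<in> set ks"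
  then obtain q where q: "q < length ks" "ks ! q = k" by (auto simp: in_set_conv_nth)
  show "k \<in> V"
  proof (cases q)
    case 0
    then show ?thesis using assms q by (simp add: oriented_chain_def)
  next
    case (Suc q')
    then have "(ks ! q', ks ! q) \<in> E \<or> (ks ! q, ks ! q') \<in> E"
      using assms(1) q unfolding oriented_chain_def by (metis Suc_eq_plus1 not_less)
    then show ?thesis using assms(2) q by auto
  qed
qed

lemma oriented_chain_remove_stutter:
  assumes oc: "oriented_chain E i j ks s" and p: "Suc p < length ks" and eq: "ks ! p = ks ! Suc p"
  shows "oriented_chain E i j (take p ks @ drop (Suc p) ks) (if p < s then s - 1 else s)"
proof -
  define ks' where "ks' = take p ks @ drop (Suc p) ks"
  define s' where "s' = (if p < s then s - 1 else s)"
  define old where "old q = (if q < p then q else Suc q)" for q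
  have len: "length ks' = length ks - 1"
    using p by (simp add: ks'_def)
  have nth: "ks' ! q = ks ! old q" if "q < length ks'" for q
    using p that by (auto simp: ks'_def old_def nth_append min_def)
  have pair: "ks' ! q = ks ! old q \<and> ks' ! Suc q = ks ! Suc (old q) \<and> Suc (old q) < length ks
      \<and> (q < s' \<longleftrightarrow> old q < s)" if "Suc q < length ks'" for q
    using nth[of q] nth[of "Suc q"] that len eq oc
    by (cases "Suc q = p") (auto simp: old_def s'_def oriented_chain_def)
  have s'_less: "s' < length ks'" using oc p len by (auto simp: s'_def oriented_chain_def)
  have "oriented_chain E i j ks' s'"
    unfolding oriented_chain_def
  proof (intro conjI allI impI)
    show "ks' \<noteq> []" using len p by auto
    show "ks' ! 0 = i"
      using nth[of 0] \<open>ks' \<noteq> []\<close> oc eq by (auto simp: old_def oriented_chain_def)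
    have "last ks' = ks ! old (length ks' - 1)"
      using nth \<open>ks' \<noteq> []\<close> by (simp add: last_conv_nth)
    also have "old (length ks' - 1) = length ks - 1"
      using p len by (auto simp: old_def)
    finally show "last ks' = j"
      using oc by (auto simp: oriented_chain_def last_conv_nth)
    show "s' < length ks'" using s'_less .
  next
    fix q assume "q < s'"
    then show "(ks' ! q, ks' ! (q + 1)) \<in> E"
      using pair[of q] oc s'_less unfolding oriented_chain_def by auto
  next
    fix q assume "s' \<le> q \<and> q + 1 < length ks'"
    then show "(ks' ! (q + 1), ks' ! q) \<in> E"
      using pair[of q] oc unfolding oriented_chain_def by auto
  qed
  then show ?thesis by (simp add: ks'_def s'_def)
qed

(* Needed because P k k and its inverse are unconstrained: a chain step from k to k says nothing. *)
lemma shortest_oriented_chain_distinct_adj: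
  assumes "shortest_oriented_chain E i j ks s"
  shows "distinct_adj ks"
  unfolding distinct_adj_conv_nth
proof (intro allI impI notI)
  fix p assume "Suc p < length ks" "ks ! p = ks ! Suc p"
  then have "oriented_chain E i j (take p ks @ drop (Suc p) ks) (if p < s then s - 1 else s)"
    using assms oriented_chain_remove_stutter unfolding shortest_oriented_chain_def by blast
  then show False
    using assms \<open>Suc p < length ks\<close> unfolding shortest_oriented_chain_def by fastforce
qed

lemma multi_algebra_boolean_algebra:
  "multi_algebra m A P \<Longrightarrow> k \<in> {1..m} \<Longrightarrow> finite_boolean_algebra (A k)"
  by (simp add: multi_algebra_def na_algebra_def)

lemma multi_algebra_proj_op:
  "multi_algebra m A P \<Longrightarrow> i \<in> {1..m} \<Longrightarrow> j \<in> {1..m} \<Longrightarrow> i \<noteq> j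
    \<Longrightarrow> proj_op (A i) (A j) (P i j)"
  by (simp add: multi_algebra_def)

lemma basic_rel_in_ncar: "basic_rel m A B \<Longrightarrow> k \<in> {1..m} \<Longrightarrow> B k \<in> ncar (A k)"
  by (auto simp: basic_rel_def natoms_def)

definition chain_step ::
  "(nat \<Rightarrow> nat \<Rightarrow> 'a \<Rightarrow> 'a) \<Rightarrow> (nat \<Rightarrow> nat \<Rightarrow> 'a \<Rightarrow> 'a) \<Rightarrow> nat list \<Rightarrow> nat \<Rightarrow>
    'a \<Rightarrow> nat \<Rightarrow> 'a" where
  "chain_step P Q ks s y p =
     (if p < s then P (ks ! p) (ks ! (p + 1)) y else Q (ks ! (p + 1)) (ks ! p) y)"

lemma chain_map_eq_foldl_chain_step:
  "chain_map P Q ks s x = foldl (chain_step P Q ks s) x [0..<length ks - 1]"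
  by (simp add: chain_map_def chain_step_def[abs_def])

context
  fixes m :: nat and A :: "nat \<Rightarrow> 'a nalg" and P Q :: "nat \<Rightarrow> nat \<Rightarrow> 'a \<Rightarrow> 'a"
    and E :: "(nat \<times> nat) set" and B :: "nat \<Rightarrow> 'a"
  assumes multi: "multi_algebra m A P"
    and inverse: "\<forall>i\<in>{1..m}. \<forall>j\<in>{1..m}. i \<noteq> j \<longrightarrow> inverse_proj (A i) (A j) (P i j) (Q i j)"
    and basic: "basic_rel m A B"
    and edges: "\<forall>k\<in>{1..m}. \<forall>l\<in>{1..m}. k \<noteq> l \<and> (k, l) \<in> E \<longrightarrow> nle (A l) (B l) (P k l (B k))"
begin

lemma proj_step_contains_basic:
  assumes "k \<in> {1..m}" "l \<in> {1..m}" "k \<noteq> l" "(k, l) \<in> E"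
    and "y \<in> ncar (A k)" "nle (A k) (B k) y"
  shows "P k l y \<in> ncar (A l) \<and> nle (A l) (B l) (P k l y)"
proof -
  have proj: "proj_op (A k) (A l) (P k l)" using multi_algebra_proj_op[OF multi assms(1-3)] .
  have "nle (A l) (B l) (P k l (B k))" using edges assms(1-4) by simp
  then show ?thesis
    using proj_op_nle_trans[OF multi_algebra_boolean_algebra[OF multi assms(2)] proj
        basic_rel_in_ncar[OF basic assms(1)] assms(5,6) basic_rel_in_ncar[OF basic assms(2)]]
      proj_op_closed[OF proj assms(5)] by blast
qed

lemma inverse_step_contains_basic:
  assumes "k \<in> {1..m}" "l \<in> {1..m}" "k \<noteq> l" "(l, k) \<in> E"
    and "y \<in> ncar (A k)" "nle (A k) (B k) y"
  shows "Q l k y \<in> ncar (A l) \<and> nle (A l) (B l) (Q l k y)"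
proof -
  have inv: "inverse_proj (A l) (A k) (P l k) (Q l k)" using inverse assms(1-3) by auto
  then have proj: "proj_op (A k) (A l) (Q l k)" by (simp add: inverse_proj_def)
  have "nle (A k) (B k) (P l k (B l))" using edges assms(1-4) by simp
  moreover have "B k \<in> natoms (A k)" "B l \<in> natoms (A l)"
    using basic assms(1,2) by (simp_all add: basic_rel_def)
  ultimately have "nle (A l) (B l) (Q l k (B k))"
    using inv unfolding inverse_proj_def by blast
  then show ?thesis
    using proj_op_nle_trans[OF multi_algebra_boolean_algebra[OF multi assms(2)] proj
        basic_rel_in_ncar[OF basic assms(1)] assms(5,6) basic_rel_in_ncar[OF basic assms(2)]]
      proj_op_closed[OF proj assms(5)] by blast
qed

lemma chain_prefix_contains_basic:
  assumes chain: "oriented_chain E i j ks s" and "set ks \<subseteq> {1..m}" "distinct_adj ks"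
  shows "n < length ks \<Longrightarrow> foldl (chain_step P Q ks s) (B i) [0..<n] \<in> ncar (A (ks ! n))
    \<and> nle (A (ks ! n)) (B (ks ! n)) (foldl (chain_step P Q ks s) (B i) [0..<n])"
proof (induction n)
  case 0
  have "ks ! 0 = i" "ks \<noteq> []" using chain by (auto simp: oriented_chain_def)
  then have "i \<in> {1..m}" using nth_mem[of 0 ks] assms(2) by auto
  with \<open>ks ! 0 = i\<close> show ?case
    using nle_refl[OF multi_algebra_boolean_algebra[OF multi] basic_rel_in_ncar[OF basic]]
      basic_rel_in_ncar[OF basic] by simp
next
  case (Suc n)
  define y where "y = foldl (chain_step P Q ks s) (B i) [0..<n]"
  have y: "y \<in> ncar (A (ks ! n))" "nle (A (ks ! n)) (B (ks ! n)) y"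
    using Suc by (auto simp: y_def)
  have "ks ! n \<in> set ks" "ks ! Suc n \<in> set ks" using Suc.prems by simp_all
  then have vertices: "ks ! n \<in> {1..m}" "ks ! Suc n \<in> {1..m}" "ks ! n \<noteq> ks ! Suc n"
    using assms(2) distinct_adj_nth[OF assms(3) Suc.prems] by blast+
  have "chain_step P Q ks s y n \<in> ncar (A (ks ! Suc n))
      \<and> nle (A (ks ! Suc n)) (B (ks ! Suc n)) (chain_step P Q ks s y n)"
  proof (cases "n < s")
    case True
    then have "(ks ! n, ks ! Suc n) \<in> E" using chain by (simp add: oriented_chain_def)
    then show ?thesis
      using proj_step_contains_basic[OF vertices _ y] True by (simp add: chain_step_def)
  next
    case False
    then have "(ks ! Suc n, ks ! n) \<in> E" using chain Suc.prems by (simp add: oriented_chain_def)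
    then show ?thesis
      using inverse_step_contains_basic[OF vertices(1,2) _ _ y] vertices(3) False
      by (simp add: chain_step_def)
  qed
  then show ?case by (simp add: y_def)
qed

lemma chain_map_contains_basic:
  assumes "oriented_chain E i j ks s" "set ks \<subseteq> {1..m}" "distinct_adj ks"
  shows "chain_map P Q ks s (B i) \<in> ncar (A j) \<and> nle (A j) (B j) (chain_map P Q ks s (B i))"
proof -
  have "ks \<noteq> []" "ks ! (length ks - 1) = j"
    using assms(1) by (auto simp: oriented_chain_def last_conv_nth)
  then show ?thesis
    using chain_prefix_contains_basic[OF assms, of "length ks - 1"]
    by (simp add: chain_map_eq_foldl_chain_step)
qed

end

theorem lemma5p11:
  fixes m :: nat and A :: "nat \<Rightarrow> 'a nalg" and P :: "nat \<Rightarrow> nat \<Rightarrow> 'a \<Rightarrow> 'a"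
    and E :: "(nat \<times> nat) set" and r :: nat and B :: "nat \<Rightarrow> 'a"
  assumes "tree_multi_algebra m A P"
    and "plenary_anti_tree m A P E r"
    and "basic_rel m A B"
    and "\<forall>k\<in>{1..m}. \<forall>l\<in>{1..m}. k \<noteq> l \<and> (k, l) \<in> E \<longrightarrow> nle (A l) (B l) (P k l (B k))"
  shows "closed_under_projection m A P B"
  unfolding closed_under_projection_def
proof (intro ballI impI)
  fix i j assume ij: "i \<in> {1..m}" "j \<in> {1..m}" "i \<noteq> j"
  have multi: "multi_algebra m A P" using assms(1) by (simp add: tree_multi_algebra_def)
  have tree: "anti_tree {1..m} E r" using assms(2) by (simp add: plenary_anti_tree_def)
  obtain Q
    where inverse: "\<forall>i\<in>{1..m}. \<forall>j\<in>{1..m}. i \<noteq> j \<longrightarrow> inverse_proj (A i) (A j) (P i j) (Q i j)"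
    and plenary: "\<forall>i\<in>{1..m}. \<forall>j\<in>{1..m}. i \<noteq> j \<longrightarrow>
      (\<forall>ks s. shortest_oriented_chain E i j ks s \<longrightarrow>
        (\<forall>b\<in>natoms (A i). nle (A j) (chain_map P Q ks s b) (P i j b)))"
    using assms(2) unfolding plenary_anti_tree_def by blast
  obtain ks s where shortest: "shortest_oriented_chain E i j ks s"
    using anti_tree_oriented_chain[OF tree ij(1,2)] shortest_oriented_chain_exists by blast
  then have chain: "oriented_chain E i j ks s" by (simp add: shortest_oriented_chain_def)
  moreover have "set ks \<subseteq> {1..m}"
    using oriented_chain_set_subset[OF chain _ ij(1)] tree by (simp add: anti_tree_def)
  ultimately have "chain_map P Q ks s (B i) \<in> ncar (A j)"
    and "nle (A j) (B j) (chain_map P Q ks s (B i))"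
    using chain_map_contains_basic[OF multi inverse assms(3,4)]
      shortest_oriented_chain_distinct_adj[OF shortest] by blast+
  moreover have "nle (A j) (chain_map P Q ks s (B i)) (P i j (B i))"
    using plenary ij shortest assms(3) by (simp add: basic_rel_def)
  moreover have "P i j (B i) \<in> ncar (A j)"
    using multi_algebra_proj_op[OF multi ij] basic_rel_in_ncar[OF assms(3) ij(1)]
    by (rule proj_op_closed)
  ultimately show "nle (A j) (B j) (P i j (B i))"
    using nle_trans[OF multi_algebra_boolean_algebra[OF multi ij(2)]
        basic_rel_in_ncar[OF assms(3) ij(2)]] by blast
qed

end
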